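(* Let $(\Omega(\mathcal{A}),d)$ be a differential calculus on a complex algebra $\mathcal{A}$ with $\mathcal{E}=\Omega^1(\mathcal{A})$ a finitely generated projective right $\mathcal{A}$-module satisfying: (1) $\mathcal{E}=\mathcal{Z}(\mathcal{E})\otimes_{\mathcal{Z}(\mathcal{A})}\mathcal{A}$; (2) $\mathcal{E}\otimes_{\mathcal{A}}\mathcal{E}=\ker(\wedge)\oplus\mathcal{F}$ with $Q=\wedge|_{\mathcal{F}}:\mathcal{F}\to\Omega^2(\mathcal{A})$ a right $\mathcal{A}$-linear isomorphism; (3) $\sigma(\omega\otimes_{\mathcal{A}}\eta)=\eta\otimes_{\mathcal{A}}\omega$ for all $\omega,\eta\in\mathcal{Z}(\mathcal{E})$. Let $\nabla_1$ be a connection on $\mathcal{E}$. Then $\nabla_1$ is a bimodule connection for the pair $(\mathcal{E},\sigma)$ if and only if $\nabla_1(\mathcal{Z}(\mathcal{E}))\subseteq\mathcal{Z}(\mathcal{E}\otimes_{\mathcal{A}}\mathcal{E})$.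
   Context: A differential calculus: $\Omega(\mathcal{A})=\oplus_{j\ge0}\Omega^j(\mathcal{A})$, $\Omega^0=\mathcal{A}$, bimodules $\Omega^j$, an $\mathcal{A}$-bimodule product $\wedge$ adding degrees, $d$ of degree one with $d^2=0$ and the graded Leibniz rule, $\Omega^j$ right-spanned by $da_0\wedge\cdots\wedge da_{j-1}$. $\wedge:\mathcal{E}\otimes_{\mathcal{A}}\mathcal{E}\to\Omega^2(\mathcal{A})$ is the induced product; $\mathcal{F}$ is a right submodule; $P_{\rm sym}$ is the idempotent with image $\ker\wedge$ and kernel $\mathcal{F}$; $\sigma=2P_{\rm sym}-1$. $\mathcal{Z}(\mathcal{M})=\{m:am=ma\ \forall a\in\mathcal{A}\}$. Condition (1) means the multiplication map $\mathcal{Z}(\mathcal{E})\otimes_{\mathcal{Z}(\mathcal{A})}\mathcal{A}\to\mathcal{E}$ is an isomorphism. A connection is a $\mathbb{C}$-linear $\nabla:\mathcal{E}\to\mathcal{E}\otimes_{\mathcal{A}}\mathcal{E}$ with $\nabla(\omega a)=\nabla(\omega)a+\omega\otimes_{\mathcal{A}}da$. It is a bimodule connection for $(\mathcal{E},\sigma)$ if moreover $\nabla(ae)=a\nabla(e)+\sigma(da\otimes_{\mathcal{A}}e)$ for all $a\in\mathcal{A}$, $e\in\mathcal{E}$. *)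

theory Defs
  imports Complex_Main "HOL-Library.Poly_Mapping"
begin

definition zsm :: "int \<Rightarrow> 'g::ab_group_add \<Rightarrow> 'g" where
  "zsm n x = (if 0 \<le> n then (\<Sum>_<nat n. x) else - (\<Sum>_<nat (- n). x))"

definition fsum_eval :: "('m \<Rightarrow> 'n \<Rightarrow> 'g::ab_group_add) \<Rightarrow> ('m \<times> 'n \<Rightarrow>\<^sub>0 int) \<Rightarrow> 'g" where
  "fsum_eval phi x = (\<Sum>k\<in>Poly_Mapping.keys x. zsm (Poly_Mapping.lookup x k) (phi (fst k) (snd k)))"

text \<open>The subgroup of the free abelian group on M x N generated by the
  defining relations of the balanced tensor product of a right R-module M
  (right action rm) with a left R-module N (left action lm).\<close>

inductive_set balrel ::
  "'m::ab_group_add set \<Rightarrow> 'n::ab_group_add set \<Rightarrow> 'r set \<Rightarrow> ('m \<Rightarrow> 'r \<Rightarrow> 'm) \<Rightarrow> ('r \<Rightarrow> 'n \<Rightarrow> 'n)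
   \<Rightarrow> ('m \<times> 'n \<Rightarrow>\<^sub>0 int) set"
  for M N R rm lm where
  zero: "0 \<in> balrel M N R rm lm"
| addL: "m1 \<in> M \<Longrightarrow> m2 \<in> M \<Longrightarrow> n \<in> N \<Longrightarrow>
     Poly_Mapping.single (m1 + m2, n) 1 - Poly_Mapping.single (m1, n) 1 - Poly_Mapping.single (m2, n) 1
       \<in> balrel M N R rm lm"
| addR: "m \<in> M \<Longrightarrow> n1 \<in> N \<Longrightarrow> n2 \<in> N \<Longrightarrow>
     Poly_Mapping.single (m, n1 + n2) 1 - Poly_Mapping.single (m, n1) 1 - Poly_Mapping.single (m, n2) 1
       \<in> balrel M N R rm lm"
| bal: "m \<in> M \<Longrightarrow> n \<in> N \<Longrightarrow> r \<in> R \<Longrightarrow>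
     Poly_Mapping.single (rm m r, n) 1 - Poly_Mapping.single (m, lm r n) 1 \<in> balrel M N R rm lm"
| add: "x \<in> balrel M N R rm lm \<Longrightarrow> y \<in> balrel M N R rm lm \<Longrightarrow> x + y \<in> balrel M N R rm lm"
| neg: "x \<in> balrel M N R rm lm \<Longrightarrow> - x \<in> balrel M N R rm lm"

definition balanced_map ::
  "'m::ab_group_add set \<Rightarrow> 'n::ab_group_add set \<Rightarrow> 'r set \<Rightarrow> ('m \<Rightarrow> 'r \<Rightarrow> 'm) \<Rightarrow> ('r \<Rightarrow> 'n \<Rightarrow> 'n)
   \<Rightarrow> ('m \<Rightarrow> 'n \<Rightarrow> 'g::ab_group_add) \<Rightarrow> bool" where
  "balanced_map M N R rm lm phi \<longleftrightarrow>
     (\<forall>m1\<in>M. \<forall>m2\<in>M. \<forall>n\<in>N. phi (m1 + m2) n = phi m1 n + phi m2 n) \<and>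
     (\<forall>m\<in>M. \<forall>n1\<in>N. \<forall>n2\<in>N. phi m (n1 + n2) = phi m n1 + phi m n2) \<and>
     (\<forall>m\<in>M. \<forall>n\<in>N. \<forall>r\<in>R. phi (rm m r) n = phi m (lm r n))"

text \<open>The additive map M (x)_R N -> G induced by a balanced map phi is a
  bijection: surjective, and its kernel is exactly the relation subgroup
  (i.e. it is injective on the quotient of the free abelian group).\<close>

definition induced_map_bij ::
  "'m::ab_group_add set \<Rightarrow> 'n::ab_group_add set \<Rightarrow> 'r set \<Rightarrow> ('m \<Rightarrow> 'r \<Rightarrow> 'm) \<Rightarrow> ('r \<Rightarrow> 'n \<Rightarrow> 'n)
   \<Rightarrow> ('m \<Rightarrow> 'n \<Rightarrow> 'g::ab_group_add) \<Rightarrow> bool" where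
  "induced_map_bij M N R rm lm phi \<longleftrightarrow>
     balanced_map M N R rm lm phi \<and>
     (\<forall>g. \<exists>x. Poly_Mapping.keys x \<subseteq> M \<times> N \<and> fsum_eval phi x = g) \<and>
     (\<forall>x. Poly_Mapping.keys x \<subseteq> M \<times> N \<and> fsum_eval phi x = 0 \<longrightarrow> x \<in> balrel M N R rm lm)"

abbreviation is_tensor_product where
  "is_tensor_product M N R rm lm tens \<equiv> induced_map_bij M N R rm lm tens"

definition centre_alg :: "'a::ring_1 set" where
  "centre_alg = {r. \<forall>a. r * a = a * r}"

definition centre_bimod :: "('a \<Rightarrow> 'm \<Rightarrow> 'm) \<Rightarrow> ('m \<Rightarrow> 'a \<Rightarrow> 'm) \<Rightarrow> 'm set" where
  "centre_bimod l r = {m. \<forall>a. l a m = r m a}"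

definition additive :: "('g::ab_group_add \<Rightarrow> 'h::ab_group_add) \<Rightarrow> bool" where
  "additive f \<longleftrightarrow> (\<forall>x y. f (x + y) = f x + f y)"

definition complex_alg :: "(complex \<Rightarrow> 'a::ring_1) \<Rightarrow> bool" where
  "complex_alg c \<longleftrightarrow> c 1 = 1 \<and> (\<forall>z w. c (z + w) = c z + c w) \<and> (\<forall>z w. c (z * w) = c z * c w)
     \<and> (\<forall>z a. c z * a = a * c z)"

definition bimodule :: "(complex \<Rightarrow> 'a::ring_1) \<Rightarrow> ('a \<Rightarrow> 'm::ab_group_add \<Rightarrow> 'm) \<Rightarrow> ('m \<Rightarrow> 'a \<Rightarrow> 'm) \<Rightarrow> bool" where
  "bimodule c l r \<longleftrightarrow>
     (\<forall>a m n. l a (m + n) = l a m + l a n) \<and> (\<forall>a b m. l (a + b) m = l a m + l b m) \<and>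
     (\<forall>a b m. l (a * b) m = l a (l b m)) \<and> (\<forall>m. l 1 m = m) \<and>
     (\<forall>a m n. r (m + n) a = r m a + r n a) \<and> (\<forall>a b m. r m (a + b) = r m a + r m b) \<and>
     (\<forall>a b m. r m (a * b) = r (r m a) b) \<and> (\<forall>m. r m 1 = m) \<and>
     (\<forall>a b m. l a (r m b) = r (l a m) b) \<and>
     (\<forall>z m. l (c z) m = r m (c z))"

text \<open>Finitely generated projective right module: a direct summand (retract,
  by right-linear maps) of a free right module A^n.\<close>

definition fgp_right :: "('m::ab_group_add \<Rightarrow> 'a::ring_1 \<Rightarrow> 'm) \<Rightarrow> bool" where
  "fgp_right r \<longleftrightarrow> (\<exists>(n::nat) (i :: 'm \<Rightarrow> nat \<Rightarrow> 'a) (p :: (nat \<Rightarrow> 'a) \<Rightarrow> 'm).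
     (\<forall>m k. n \<le> k \<longrightarrow> i m k = 0) \<and>
     (\<forall>m m' k. i (m + m') k = i m k + i m' k) \<and> (\<forall>m a. i (r m a) = (\<lambda>k. i m k * a)) \<and>
     (\<forall>v w. p (\<lambda>k. v k + w k) = p v + p w) \<and> (\<forall>v a. p (\<lambda>k. v k * a) = r (p v) a) \<and>
     (\<forall>m. p (i m) = m))"

text \<open>A differential calculus, truncated at degree 2 (all data involved in
  the statement): Omega^0 = A, Omega^1 = E, Omega^2 = W, differentials
  d0 : A -> E, d1 : E -> W, and the product wedge : E x E -> W.\<close>

definition diff_calc ::
  "(complex \<Rightarrow> 'a::ring_1) \<Rightarrow> ('a \<Rightarrow> 'e::ab_group_add \<Rightarrow> 'e) \<Rightarrow> ('e \<Rightarrow> 'a \<Rightarrow> 'e)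
   \<Rightarrow> ('a \<Rightarrow> 'w::ab_group_add \<Rightarrow> 'w) \<Rightarrow> ('w \<Rightarrow> 'a \<Rightarrow> 'w)
   \<Rightarrow> ('a \<Rightarrow> 'e) \<Rightarrow> ('e \<Rightarrow> 'w) \<Rightarrow> ('e \<Rightarrow> 'e \<Rightarrow> 'w) \<Rightarrow> bool" where
  "diff_calc c lE rE lW rW d0 d1 wedge \<longleftrightarrow>
     complex_alg c \<and> bimodule c lE rE \<and> bimodule c lW rW \<and>
     \<comment> \<open>d0: C-linear, Leibniz rule\<close>
     additive d0 \<and> (\<forall>z a. d0 (c z * a) = lE (c z) (d0 a)) \<and>
     (\<forall>a b. d0 (a * b) = rE (d0 a) b + lE a (d0 b)) \<and>
     \<comment> \<open>wedge: bimodule product E x E -> W\<close>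
     (\<forall>e f g. wedge (e + f) g = wedge e g + wedge f g) \<and>
     (\<forall>e f g. wedge e (f + g) = wedge e f + wedge e g) \<and>
     (\<forall>a e f. wedge (lE a e) f = lW a (wedge e f)) \<and>
     (\<forall>a e f. wedge (rE e a) f = wedge e (lE a f)) \<and>
     (\<forall>a e f. wedge e (rE f a) = rW (wedge e f) a) \<and>
     \<comment> \<open>d1: C-linear, d1 o d0 = 0, graded Leibniz rule\<close>
     additive d1 \<and> (\<forall>z e. d1 (lE (c z) e) = lW (c z) (d1 e)) \<and>
     (\<forall>a. d1 (d0 a) = 0) \<and>
     (\<forall>a e. d1 (lE a e) = wedge (d0 a) e + lW a (d1 e)) \<and>
     (\<forall>a e. d1 (rE e a) = rW (d1 e) a - wedge e (d0 a)) \<and>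
     \<comment> \<open>spanning conditions\<close>
     (\<forall>e. \<exists>xs. e = (\<Sum>(a, b)\<leftarrow>xs. rE (d0 a) b)) \<and>
     (\<forall>w. \<exists>xs. w = (\<Sum>(a, b, b')\<leftarrow>xs. rW (wedge (d0 a) (d0 b)) b'))"

text \<open>P_sym: the idempotent with image ker(wedge) and kernel F.\<close>

definition Psym :: "('t::ab_group_add \<Rightarrow> 'w::ab_group_add) \<Rightarrow> 't set \<Rightarrow> 't \<Rightarrow> 't" where
  "Psym wT F t = (THE k. wT k = 0 \<and> t - k \<in> F)"

definition sigma :: "('t::ab_group_add \<Rightarrow> 'w::ab_group_add) \<Rightarrow> 't set \<Rightarrow> 't \<Rightarrow> 't" where
  "sigma wT F t = Psym wT F t + Psym wT F t - t"

definition tensor_square ::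
  "('a::ring_1 \<Rightarrow> 'e::ab_group_add \<Rightarrow> 'e) \<Rightarrow> ('e \<Rightarrow> 'a \<Rightarrow> 'e) \<Rightarrow> ('e \<Rightarrow> 'e \<Rightarrow> 't::ab_group_add)
   \<Rightarrow> ('a \<Rightarrow> 't \<Rightarrow> 't) \<Rightarrow> ('t \<Rightarrow> 'a \<Rightarrow> 't) \<Rightarrow> bool" where
  "tensor_square lE rE tens lT rT \<longleftrightarrow>
     is_tensor_product UNIV UNIV UNIV rE lE tens \<and>
     (\<forall>a. additive (lT a)) \<and> (\<forall>a. additive (\<lambda>t. rT t a)) \<and>
     (\<forall>a e f. lT a (tens e f) = tens (lE a e) f) \<and>
     (\<forall>a e f. rT (tens e f) a = tens e (rE f a))"

definition right_submodule :: "('t::ab_group_add \<Rightarrow> 'a \<Rightarrow> 't) \<Rightarrow> 't set \<Rightarrow> bool" where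
  "right_submodule rT F \<longleftrightarrow> 0 \<in> F \<and> (\<forall>x\<in>F. \<forall>y\<in>F. x + y \<in> F) \<and> (\<forall>x\<in>F. - x \<in> F) \<and>
     (\<forall>x\<in>F. \<forall>a. rT x a \<in> F)"

definition connection ::
  "(complex \<Rightarrow> 'a::ring_1) \<Rightarrow> ('e::ab_group_add \<Rightarrow> 'a \<Rightarrow> 'e) \<Rightarrow> ('t::ab_group_add \<Rightarrow> 'a \<Rightarrow> 't)
   \<Rightarrow> ('e \<Rightarrow> 'e \<Rightarrow> 't) \<Rightarrow> ('a \<Rightarrow> 'e) \<Rightarrow> ('e \<Rightarrow> 't) \<Rightarrow> bool" where
  "connection c rE rT tens d0 nabla \<longleftrightarrow>
     additive nabla \<and> (\<forall>z e. nabla (rE e (c z)) = rT (nabla e) (c z)) \<and>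
     (\<forall>w a. nabla (rE w a) = rT (nabla w) a + tens w (d0 a))"

definition bimodule_connection ::
  "(complex \<Rightarrow> 'a::ring_1) \<Rightarrow> ('a \<Rightarrow> 'e::ab_group_add \<Rightarrow> 'e) \<Rightarrow> ('e \<Rightarrow> 'a \<Rightarrow> 'e)
   \<Rightarrow> ('a \<Rightarrow> 't::ab_group_add \<Rightarrow> 't) \<Rightarrow> ('t \<Rightarrow> 'a \<Rightarrow> 't)
   \<Rightarrow> ('e \<Rightarrow> 'e \<Rightarrow> 't) \<Rightarrow> ('a \<Rightarrow> 'e) \<Rightarrow> ('t \<Rightarrow> 't) \<Rightarrow> ('e \<Rightarrow> 't) \<Rightarrow> bool" where
  "bimodule_connection c lE rE lT rT tens d0 \<sigma> nabla \<longleftrightarrow>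
     connection c rE rT tens d0 nabla \<and>
     (\<forall>a e. nabla (lE a e) = lT a (nabla e) + \<sigma> (tens (d0 a) e))"

end

theory Submission
  imports Defs
begin

(* By condition (1) every one-form is a sum of terms w b with w central, so an additive map
   on E is determined by its values on such terms, and likewise every element of E (x)_A E
   is a sum of elementary tensors.  The kernel of wedge and F are right submodules, so sigma
   is right linear; together with condition (3) and the balancing of the tensor product this
   gives sigma (e (x) w) = w (x) e for every central w.  For central w the two Leibniz rules
   applied to nabla (a w) = nabla (w a) then differ exactly by a nabla(w) - nabla(w) a, which
   gives necessity.  Conversely, if nabla(w) is central, the left Leibniz rule holds on every
   w b, hence everywhere. *)

lemma additive_0: "additive f \<Longrightarrow> f 0 = 0"
  unfolding additive_def by (metis add_cancel_left_left add_0)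

lemma additive_uminus: "additive f \<Longrightarrow> f (- x) = - f x"
  using additive_0[of f] unfolding additive_def
  by (metis add.right_inverse neg_eq_iff_add_eq_0)

lemma additive_diff: "additive f \<Longrightarrow> f (x - y) = f x - f y"
  using additive_uminus[of f] unfolding additive_def
  by (metis diff_conv_add_uminus)

lemma additive_comp: "additive f \<Longrightarrow> additive g \<Longrightarrow> additive (\<lambda>x. f (g x))"
  unfolding additive_def by simp

lemma additive_add: "additive f \<Longrightarrow> additive g \<Longrightarrow> additive (\<lambda>x. f x + g x)"
  unfolding additive_def by (simp add: algebra_simps)

lemma additive_sum: "additive f \<Longrightarrow> f (sum g A) = (\<Sum>a\<in>A. f (g a))"
  by (induction A rule: infinite_finite_induct) (auto simp: additive_0 additive_def)

lemma additive_zsm: "additive f \<Longrightarrow> f (zsm n y) = zsm n (f y)"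
  unfolding zsm_def by (simp add: additive_sum additive_uminus)

lemma additive_fsum_eval: "additive f \<Longrightarrow> f (fsum_eval phi x) = fsum_eval (\<lambda>m n. f (phi m n)) x"
  unfolding fsum_eval_def by (simp add: additive_sum additive_zsm)

lemma induced_map_bij_additive_eqI:
  assumes "induced_map_bij M N R rm lm phi" and "additive f" "additive g"
    and "\<And>m n. m \<in> M \<Longrightarrow> n \<in> N \<Longrightarrow> f (phi m n) = g (phi m n)"
  shows "f y = g y"
proof -
  obtain x where x: "Poly_Mapping.keys x \<subseteq> M \<times> N" "fsum_eval phi x = y"
    using assms(1) unfolding induced_map_bij_def by blast
  have "f (fsum_eval phi x) = fsum_eval (\<lambda>m n. f (phi m n)) x"
    using assms(2) by (rule additive_fsum_eval)
  also have "\<dots> = fsum_eval (\<lambda>m n. g (phi m n)) x"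
    unfolding fsum_eval_def using x(1) assms(4) by (intro sum.cong) auto
  also have "\<dots> = g (fsum_eval phi x)"
    using assms(3) by (rule additive_fsum_eval[symmetric])
  finally show ?thesis using x(2) by simp
qed

locale kernel_complement =
  fixes wT :: "'t::ab_group_add \<Rightarrow> 'w::ab_group_add" and F :: "'t set"
  assumes additive_wT: "additive wT"
    and diff_closed: "\<And>x y. x \<in> F \<Longrightarrow> y \<in> F \<Longrightarrow> x - y \<in> F"
    and kernel_Int: "{k. wT k = 0} \<inter> F = {0}"
    and kernel_plus: "\<And>t. \<exists>k f. wT k = 0 \<and> f \<in> F \<and> t = k + f"
begin

lemma add_closed: "x \<in> F \<Longrightarrow> y \<in> F \<Longrightarrow> x + y \<in> F"
  using diff_closed kernel_Int by (metis IntD2 diff_0 diff_minus_eq_add insertI1)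

lemma Psym_eqI:
  assumes "wT k = 0" "t - k \<in> F"
  shows "Psym wT F t = k"
proof -
  have "k' = k" if "wT k' = 0" "t - k' \<in> F" for k'
  proof -
    have "k' - k \<in> F" using diff_closed[OF assms(2) that(2)] by simp
    moreover have "wT (k' - k) = 0" using additive_diff[OF additive_wT] assms(1) that(1) by simp
    ultimately have "k' - k \<in> {k. wT k = 0} \<inter> F" by simp
    then show ?thesis by (simp add: kernel_Int)
  qed
  then show ?thesis unfolding Psym_def using assms by blast
qed

lemma Psym_kernel: "wT (Psym wT F t) = 0" and diff_Psym_in: "t - Psym wT F t \<in> F"
proof -
  obtain k f where "wT k = 0" "f \<in> F" "t = k + f" using kernel_plus by blast
  then have "Psym wT F t = k" "t - k \<in> F" using Psym_eqI by auto
  with \<open>wT k = 0\<close> show "wT (Psym wT F t) = 0" "t - Psym wT F t \<in> F" by auto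
qed

lemma additive_Psym: "additive (Psym wT F)"
  unfolding additive_def
proof (intro allI Psym_eqI)
  fix s t
  show "wT (Psym wT F s + Psym wT F t) = 0"
    using Psym_kernel additive_wT unfolding additive_def by simp
  have "s + t - (Psym wT F s + Psym wT F t) = (s - Psym wT F s) + (t - Psym wT F t)" by simp
  then show "s + t - (Psym wT F s + Psym wT F t) \<in> F"
    using diff_Psym_in add_closed by metis
qed

lemma Psym_commute:
  assumes h: "additive h" and "\<And>k. wT k = 0 \<Longrightarrow> wT (h k) = 0" and "\<And>f. f \<in> F \<Longrightarrow> h f \<in> F"
  shows "Psym wT F (h t) = h (Psym wT F t)"
proof (rule Psym_eqI)
  show "wT (h (Psym wT F t)) = 0" using assms(2) Psym_kernel by blast
  show "h t - h (Psym wT F t) \<in> F"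
    using assms(3)[OF diff_Psym_in] additive_diff[OF h] by metis
qed

lemma additive_sigma: "additive (sigma wT F)"
  using additive_Psym unfolding additive_def sigma_def by (simp add: algebra_simps)

lemma sigma_commute:
  assumes h: "additive h" and "\<And>k. wT k = 0 \<Longrightarrow> wT (h k) = 0" and "\<And>f. f \<in> F \<Longrightarrow> h f \<in> F"
  shows "sigma wT F (h t) = h (sigma wT F t)"
  using Psym_commute[OF assms] h unfolding sigma_def additive_def
  by (simp add: additive_diff[OF h])

end

lemma bimodule_additive:
  assumes "bimodule c l r"
  shows "additive (l a)" "additive (\<lambda>m. r m a)"
  using assms unfolding bimodule_def additive_def by auto

lemma tensor_square_additive_eqI:
  assumes "tensor_square lE rE tens lT rT" and "additive f" "additive g"
    and "\<And>e e'. f (tens e e') = g (tens e e')"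
  shows "f t = g t"
  using assms unfolding tensor_square_def by (auto intro: induced_map_bij_additive_eqI)

lemma tensor_square_additive:
  assumes "tensor_square lE rE tens lT rT"
  shows "additive (\<lambda>e. tens e e')" "additive (tens e)"
    and "additive (lT a)" "additive (\<lambda>t. rT t a)"
  using assms unfolding tensor_square_def induced_map_bij_def balanced_map_def additive_def
  by auto

lemma tensor_square_balanced:
  "tensor_square lE rE tens lT rT \<Longrightarrow> tens (rE e a) e' = tens e (lE a e')"
  unfolding tensor_square_def induced_map_bij_def balanced_map_def by auto

lemma tensor_square_actions:
  "tensor_square lE rE tens lT rT \<Longrightarrow> lT a (tens e e') = tens (lE a e) e'"
  "tensor_square lE rE tens lT rT \<Longrightarrow> rT (tens e e') a = tens e (rE e' a)"
  unfolding tensor_square_def by auto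

lemma tensor_square_lT_rT:
  assumes T: "tensor_square lE rE tens lT rT"
  shows "lT a (rT t b) = rT (lT a t) b"
proof (rule tensor_square_additive_eqI[OF T, where f = "\<lambda>t. lT a (rT t b)"])
  show "additive (\<lambda>t. lT a (rT t b))"
    using tensor_square_additive(3,4)[OF T] by (rule additive_comp)
  show "additive (\<lambda>t. rT (lT a t) b)"
    using tensor_square_additive(4,3)[OF T] by (rule additive_comp)
  show "lT a (rT (tens e e') b) = rT (lT a (tens e e')) b" for e e'
    by (simp add: tensor_square_actions[OF T])
qed

lemma tensor_square_rT_rT:
  assumes T: "tensor_square lE rE tens lT rT" and E: "bimodule c lE rE"
  shows "rT (rT t a) b = rT t (a * b)"
proof (rule tensor_square_additive_eqI[OF T, where f = "\<lambda>t. rT (rT t a) b" and g = "\<lambda>t. rT t (a * b)"])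
  show "additive (\<lambda>t. rT (rT t a) b)"
    using tensor_square_additive(4,4)[OF T] by (rule additive_comp)
  show "additive (\<lambda>t. rT t (a * b))" by (rule tensor_square_additive(4)[OF T])
  show "rT (rT (tens e e') a) b = rT (tens e e') (a * b)" for e e'
    using E unfolding bimodule_def by (simp add: tensor_square_actions[OF T])
qed

lemma wedge_map_right_linear:
  assumes T: "tensor_square lE rE tens lT rT" and calc: "diff_calc c lE rE lW rW d0 d1 wedge"
    and wT: "additive wT" "\<And>e e'. wT (tens e e') = wedge e e'"
  shows "wT (rT t a) = rW (wT t) a"
proof (rule tensor_square_additive_eqI[OF T])
  have "bimodule c lW rW" using calc unfolding diff_calc_def by simp
  show "additive (\<lambda>t. wT (rT t a))"
    using wT(1) tensor_square_additive(4)[OF T] by (rule additive_comp)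
  show "additive (\<lambda>t. rW (wT t) a)"
    using bimodule_additive(2)[OF \<open>bimodule c lW rW\<close>] wT(1) by (rule additive_comp)
  show "wT (rT (tens e e') a) = rW (wT (tens e e')) a" for e e'
    using calc unfolding diff_calc_def by (simp add: wT(2) tensor_square_actions[OF T])
qed

lemma (in kernel_complement) sigma_right_linear:
  assumes T: "tensor_square lE rE tens lT rT" and calc: "diff_calc c lE rE lW rW d0 d1 wedge"
    and wT_tens: "\<And>e e'. wT (tens e e') = wedge e e'" and F: "right_submodule rT F"
  shows "sigma wT F (rT t a) = rT (sigma wT F t) a"
proof (rule sigma_commute)
  show "additive (\<lambda>t. rT t a)" by (rule tensor_square_additive(4)[OF T])
  have "bimodule c lW rW" using calc unfolding diff_calc_def by simp
  then have "rW 0 a = 0" using bimodule_additive(2) additive_0 by blast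
  then show "wT (rT k a) = 0" if "wT k = 0" for k
    using that wedge_map_right_linear[OF T calc additive_wT wT_tens] by simp
  show "rT f a \<in> F" if "f \<in> F" for f
    using F that unfolding right_submodule_def by blast
qed

lemma flip_tens_centre:
  assumes T: "tensor_square lE rE tens lT rT"
    and centre_span: "induced_map_bij (centre_bimod lE rE) UNIV centre_alg rE (*) rE"
    and \<sigma>: "additive \<sigma>" "\<And>t a. \<sigma> (rT t a) = rT (\<sigma> t) a"
    and flip: "\<And>w v. w \<in> centre_bimod lE rE \<Longrightarrow> v \<in> centre_bimod lE rE \<Longrightarrow> \<sigma> (tens w v) = tens v w"
    and w: "w \<in> centre_bimod lE rE"
  shows "\<sigma> (tens e w) = tens w e"
proof (rule induced_map_bij_additive_eqI[OF centre_span])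
  show "additive (\<lambda>e. \<sigma> (tens e w))" "additive (tens w)"
    using additive_comp[OF \<sigma>(1) tensor_square_additive(1)[OF T]] tensor_square_additive(2)[OF T]
    by auto
  fix v b assume v: "v \<in> centre_bimod lE rE"
  have "tens (rE v b) w = rT (tens v w) b"
    using w unfolding centre_bimod_def
    by (simp add: tensor_square_balanced[OF T] tensor_square_actions[OF T])
  then have "\<sigma> (tens (rE v b) w) = \<sigma> (rT (tens v w) b)" by simp
  also have "\<dots> = tens w (rE v b)"
    unfolding \<sigma>(2) flip[OF v w] by (rule tensor_square_actions(2)[OF T])
  finally show "\<sigma> (tens (rE v b) w) = tens w (rE v b)" .
qed

lemma centre_preserving_if_bimodule_connection:
  assumes bc: "bimodule_connection c lE rE lT rT tens d0 \<sigma> nabla"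
    and flip: "\<And>e w. w \<in> centre_bimod lE rE \<Longrightarrow> \<sigma> (tens e w) = tens w e"
  shows "nabla ` centre_bimod lE rE \<subseteq> centre_bimod lT rT"
proof (rule image_subsetI)
  fix w assume w: "w \<in> centre_bimod lE rE"
  have "lT a (nabla w) + tens w (d0 a) = rT (nabla w) a + tens w (d0 a)" for a
  proof -
    have "lT a (nabla w) + tens w (d0 a) = nabla (lE a w)"
      using bc flip[OF w] unfolding bimodule_connection_def by simp
    also have "\<dots> = nabla (rE w a)"
      using w unfolding centre_bimod_def by simp
    also have "\<dots> = rT (nabla w) a + tens w (d0 a)"
      using bc unfolding bimodule_connection_def connection_def by simp
    finally show ?thesis .
  qed
  then show "nabla w \<in> centre_bimod lT rT" unfolding centre_bimod_def by simp
qed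

lemma bimodule_connection_if_centre_preserving:
  assumes E: "bimodule c lE rE" and T: "tensor_square lE rE tens lT rT"
    and centre_span: "induced_map_bij (centre_bimod lE rE) UNIV centre_alg rE (*) rE"
    and leibniz: "\<And>a b. d0 (a * b) = rE (d0 a) b + lE a (d0 b)"
    and \<sigma>: "additive \<sigma>" "\<And>t a. \<sigma> (rT t a) = rT (\<sigma> t) a"
    and flip: "\<And>e w. w \<in> centre_bimod lE rE \<Longrightarrow> \<sigma> (tens e w) = tens w e"
    and conn: "connection c rE rT tens d0 nabla"
    and centre: "nabla ` centre_bimod lE rE \<subseteq> centre_bimod lT rT"
  shows "bimodule_connection c lE rE lT rT tens d0 \<sigma> nabla"
  unfolding bimodule_connection_def
proof (intro conjI allI conn)
  have nabla: "additive nabla" "\<And>e b. nabla (rE e b) = rT (nabla e) b + tens e (d0 b)"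
    using conn unfolding connection_def by auto
  have tens_add: "tens w (e + e') = tens w e + tens w e'" for w e e'
    using tensor_square_additive(2)[OF T] unfolding additive_def by simp
  fix a e
  show "nabla (lE a e) = lT a (nabla e) + \<sigma> (tens (d0 a) e)"
  proof (rule induced_map_bij_additive_eqI[OF centre_span])
    show "additive (\<lambda>e. nabla (lE a e))"
      using nabla(1) bimodule_additive(1)[OF E] by (rule additive_comp)
    show "additive (\<lambda>e. lT a (nabla e) + \<sigma> (tens (d0 a) e))"
      using additive_comp[OF tensor_square_additive(3)[OF T] nabla(1)]
        additive_comp[OF \<sigma>(1) tensor_square_additive(2)[OF T]]
      by (rule additive_add)
    fix w b assume w: "w \<in> centre_bimod lE rE"
    have wa: "lE a w = rE w a" using w unfolding centre_bimod_def by simp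
    have nabla_w: "lT a (nabla w) = rT (nabla w) a" using centre w unfolding centre_bimod_def by auto
    have lT_add: "lT a (t + t') = lT a t + lT a t'" for t t'
      using tensor_square_additive(3)[OF T] unfolding additive_def by simp
    have flip_rE: "\<sigma> (tens (d0 a) (rE w b)) = rT (\<sigma> (tens (d0 a) w)) b"
      by (simp only: tensor_square_actions(2)[OF T, symmetric] \<sigma>(2))
    have "nabla (lE a (rE w b)) = nabla (rE w (a * b))"
      using E wa unfolding bimodule_def by simp
    also have "\<dots> = rT (nabla w) (a * b) + tens w (lE a (d0 b)) + tens w (rE (d0 a) b)"
      by (simp only: nabla(2) leibniz tens_add add.assoc add.commute[of "tens w (rE (d0 a) b)"])
    also have "\<dots> = rT (rT (nabla w) a) b + tens (lE a w) (d0 b) + rT (\<sigma> (tens (d0 a) w)) b"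
      by (simp only: tensor_square_rT_rT[OF T E] wa tensor_square_balanced[OF T] flip[OF w]
          tensor_square_actions(2)[OF T])
    also have "\<dots> = lT a (nabla (rE w b)) + \<sigma> (tens (d0 a) (rE w b))"
      by (simp only: nabla(2) lT_add nabla_w tensor_square_lT_rT[OF T] tensor_square_actions(1)[OF T]
          flip_rE)
    finally show "nabla (lE a (rE w b)) = lT a (nabla (rE w b)) + \<sigma> (tens (d0 a) (rE w b))" .
  qed
qed

theorem proposition7p2:
  fixes c :: "complex \<Rightarrow> 'a::ring_1"
    and lE :: "'a \<Rightarrow> 'e::ab_group_add \<Rightarrow> 'e" and rE :: "'e \<Rightarrow> 'a \<Rightarrow> 'e"
    and lW :: "'a \<Rightarrow> 'w::ab_group_add \<Rightarrow> 'w" and rW :: "'w \<Rightarrow> 'a \<Rightarrow> 'w"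
    and d0 :: "'a \<Rightarrow> 'e" and d1 :: "'e \<Rightarrow> 'w" and wedge :: "'e \<Rightarrow> 'e \<Rightarrow> 'w"
    and tens :: "'e \<Rightarrow> 'e \<Rightarrow> 't::ab_group_add"
    and lT :: "'a \<Rightarrow> 't \<Rightarrow> 't" and rT :: "'t \<Rightarrow> 'a \<Rightarrow> 't"
    and wT :: "'t \<Rightarrow> 'w" and F :: "'t set" and nabla :: "'e \<Rightarrow> 't"
  assumes calc: "diff_calc c lE rE lW rW d0 d1 wedge"
    and fgp: "fgp_right rE"
    and tensor: "tensor_square lE rE tens lT rT"
    and wT_add: "additive wT"
    and wT_tens: "\<And>e f. wT (tens e f) = wedge e f"
    and cond1: "induced_map_bij (centre_bimod lE rE) UNIV centre_alg rE (*) rE"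
    and F_sub: "right_submodule rT F"
    and cond2_sum: "\<And>t. \<exists>k f. wT k = 0 \<and> f \<in> F \<and> t = k + f"
    and cond2_int: "{k. wT k = 0} \<inter> F = {0}"
    and cond2_Q: "bij_betw wT F UNIV"
    and cond3: "\<And>w v. w \<in> centre_bimod lE rE \<Longrightarrow> v \<in> centre_bimod lE rE \<Longrightarrow>
                  sigma wT F (tens w v) = tens v w"
    and conn: "connection c rE rT tens d0 nabla"
  shows "bimodule_connection c lE rE lT rT tens d0 (sigma wT F) nabla
           \<longleftrightarrow> nabla ` centre_bimod lE rE \<subseteq> centre_bimod lT rT"
proof -
  have E: "bimodule c lE rE" and leibniz: "\<And>a b. d0 (a * b) = rE (d0 a) b + lE a (d0 b)"
    using calc unfolding diff_calc_def by auto
  have "x - y \<in> F" if "x \<in> F" "y \<in> F" for x y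
    using F_sub that unfolding right_submodule_def by (metis diff_conv_add_uminus)
  then interpret kernel_complement wT F
    using wT_add cond2_int cond2_sum by unfold_locales
  have sigma_rT: "sigma wT F (rT t a) = rT (sigma wT F t) a" for t a
    using tensor calc wT_tens F_sub by (rule sigma_right_linear)
  have flip: "sigma wT F (tens e w) = tens w e" if "w \<in> centre_bimod lE rE" for e w
    using flip_tens_centre[OF tensor cond1 additive_sigma sigma_rT cond3 that] .
  show ?thesis
  proof
    show "nabla ` centre_bimod lE rE \<subseteq> centre_bimod lT rT"
      if "bimodule_connection c lE rE lT rT tens d0 (sigma wT F) nabla"
      using that flip by (rule centre_preserving_if_bimodule_connection)
    show "bimodule_connection c lE rE lT rT tens d0 (sigma wT F) nabla"
      if "nabla ` centre_bimod lE rE \<subseteq> centre_bimod lT rT"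
      using E tensor cond1 leibniz additive_sigma sigma_rT flip conn that
      by (rule bimodule_connection_if_centre_preserving)
  qed
qed

end
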